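(* Let $\alpha\ge0$, $\beta>0$, $\gamma\in\mathbb{R}$, $n\ge2$. Let $f=(f^1,\dots,f^n):\mathbb{R}_+\to\{(x^1,\dots,x^n)\in\mathbb{R}_+^n:\ 0\le x^1\le\dots\le x^n\}$ be a continuous deterministic function such that $0\le f^1_t<f^2_t<\dots<f^n_t$ for $dt$-almost every $t$. Then for all $t\ge0$, $$\sum_{i=1}^{n-1}\int_0^t\frac{f^{i+1}_s}{f^{i+1}_s-f^i_s}\,ds<+\infty\iff\sum_{i=1}^n\int_0^t\Big|\alpha-2\gamma f^i_s+\beta\sum_{j\ne i}\frac{f^i_s+f^j_s}{f^i_s-f^j_s}\Big|\,ds<+\infty,$$ with the convention that for $i\ne j$, $\frac{f^i_s}{f^j_s-f^i_s}=+\infty$ when $f^j_s=f^i_s$. *)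

theory Defs
  imports "HOL-Analysis.Analysis"
begin

definition gap_ratio :: "real \<Rightarrow> real \<Rightarrow> ennreal" where
  "gap_ratio a b = (if a = b then \<infinity> else ennreal (b / (b - a)))"

end

theory Submission
  imports Defs
begin

text \<open>At a time s with 0 \<le> x(1) < ... < x(n), let G be the gap sum of the ratios
  x(k+1) / (x(k+1) - x(k)) and D(i) the drift of the i-th coordinate. Both integrals are
  controlled by pointwise affine bounds between G and the sum of the \<bar>D(i)\<bar>, with constants
  depending only on a bound for x(n), which is finite on [0, t] by continuity.
  For i < j the interaction (x(i) + x(j)) / (x(j) - x(i)) is at most 2 x(j) / (x(j) - x(j-1)),
  hence at most 2 G; this bounds the drifts by G. Conversely, in D(1) + ... + D(k) the
  interactions inside {1..k} cancel by antisymmetry, and the remaining cross terms are all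
  nonpositive, one of them being at most -x(k+1) / (x(k+1) - x(k)); so \<beta> times each gap
  ratio is bounded by the sum of the \<bar>D(i)\<bar> plus a constant.\<close>

definition gap_sum :: "(nat \<Rightarrow> real) \<Rightarrow> nat \<Rightarrow> real" where
  "gap_sum x n = (\<Sum>k\<in>{1..n-1}. x (Suc k) / (x (Suc k) - x k))"

definition drift :: "real \<Rightarrow> real \<Rightarrow> real \<Rightarrow> (nat \<Rightarrow> real) \<Rightarrow> nat \<Rightarrow> nat \<Rightarrow> real" where
  "drift \<alpha> \<beta> \<gamma> x n i = \<alpha> - 2 * \<gamma> * x i + \<beta> * (\<Sum>j\<in>{1..n} - {i}. (x i + x j) / (x i - x j))"

lemma interaction_antisym: "(a + b) / (a - b) = - ((b + a) / (b - a))" for a b :: real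
  by (simp add: minus_divide_right add.commute)

lemma double_sum_antisym_eq_zero:
  fixes h :: "'a \<Rightarrow> 'a \<Rightarrow> real"
  assumes "\<And>i j. i \<in> K \<Longrightarrow> j \<in> K \<Longrightarrow> h i j = - h j i"
  shows "(\<Sum>i\<in>K. \<Sum>j\<in>K. h i j) = 0"
proof -
  have "(\<Sum>i\<in>K. \<Sum>j\<in>K. h i j) = (\<Sum>j\<in>K. \<Sum>i\<in>K. h i j)"
    by (rule sum.swap)
  also have "\<dots> = (\<Sum>j\<in>K. \<Sum>i\<in>K. - h j i)"
    by (intro sum.cong refl) (blast intro: assms)
  also have "\<dots> = - (\<Sum>j\<in>K. \<Sum>i\<in>K. h j i)"
    by (simp add: sum_negf)
  finally show ?thesis
    by simp
qed

lemma sum_drift_initial_block: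
  assumes "k \<le> n"
  shows "(\<Sum>i\<in>{1..k}. drift \<alpha> \<beta> \<gamma> x n i) = k * \<alpha> - 2 * \<gamma> * (\<Sum>i\<in>{1..k}. x i)
    + \<beta> * (\<Sum>i\<in>{1..k}. \<Sum>j\<in>{Suc k..n}. (x i + x j) / (x i - x j))"
proof -
  let ?\<phi> = "\<lambda>i j. (x i + x j) / (x i - x j)"
  have split: "(\<Sum>j\<in>{1..n} - {i}. ?\<phi> i j) = (\<Sum>j\<in>{1..k}. ?\<phi> i j) + (\<Sum>j\<in>{Suc k..n}. ?\<phi> i j)" for i
  proof -
    have "(\<Sum>j\<in>{1..n} - {i}. ?\<phi> i j) = (\<Sum>j\<in>{1..n}. ?\<phi> i j)"
      \<comment> \<open>the diagonal term is (2 * x i) / 0 = 0\<close>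
      by (simp add: sum_diff1)
    also have "\<dots> = (\<Sum>j\<in>{1..k} \<union> {Suc k..n}. ?\<phi> i j)"
      using assms by (intro sum.cong) auto
    also have "\<dots> = (\<Sum>j\<in>{1..k}. ?\<phi> i j) + (\<Sum>j\<in>{Suc k..n}. ?\<phi> i j)"
      by (rule sum.union_disjoint) auto
    finally show ?thesis .
  qed
  have cancel: "(\<Sum>i\<in>{1..k}. \<Sum>j\<in>{1..k}. ?\<phi> i j) = 0"
    by (rule double_sum_antisym_eq_zero) (rule interaction_antisym)
  have "(\<Sum>i\<in>{1..k}. drift \<alpha> \<beta> \<gamma> x n i) = (\<Sum>i\<in>{1..k}. \<alpha> - 2 * \<gamma> * x i)
      + \<beta> * ((\<Sum>i\<in>{1..k}. \<Sum>j\<in>{1..k}. ?\<phi> i j) + (\<Sum>i\<in>{1..k}. \<Sum>j\<in>{Suc k..n}. ?\<phi> i j))"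
    unfolding drift_def split by (simp only: sum.distrib distrib_left sum_distrib_left)
  then show ?thesis
    unfolding cancel by (simp add: sum_subtractf sum_distrib_left)
qed

locale increasing_config =
  fixes x :: "nat \<Rightarrow> real" and n :: nat
  assumes increasing: "\<And>i. 1 \<le> i \<Longrightarrow> i < n \<Longrightarrow> x i < x (Suc i)"
    and first_nonneg: "0 \<le> x 1"
begin

lemma less_of_less: "1 \<le> i \<Longrightarrow> i < j \<Longrightarrow> j \<le> n \<Longrightarrow> x i < x j"
  by (rule lift_Suc_mono_less_ivl[where N = "{1..<n}"]) (auto intro: increasing)

lemma le_of_le: "1 \<le> i \<Longrightarrow> i \<le> j \<Longrightarrow> j \<le> n \<Longrightarrow> x i \<le> x j"
  using less_of_less[of i j] by (cases "i = j") auto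

lemma nonneg: "i \<in> {1..n} \<Longrightarrow> 0 \<le> x i"
  using le_of_le[of 1 i] first_nonneg by auto

lemma le_last: "i \<in> {1..n} \<Longrightarrow> x i \<le> x n"
  using le_of_le[of i n] by auto

lemma gap_term_nonneg:
  assumes "k \<in> {1..n-1}"
  shows "0 \<le> x (Suc k) / (x (Suc k) - x k)"
proof -
  have "x k < x (Suc k)" "0 \<le> x (Suc k)"
    using assms by (auto intro: increasing nonneg)
  then show ?thesis by simp
qed

lemma gap_term_le_gap_sum: "k \<in> {1..n-1} \<Longrightarrow> x (Suc k) / (x (Suc k) - x k) \<le> gap_sum x n"
  unfolding gap_sum_def by (rule member_le_sum) (auto intro: gap_term_nonneg)

lemma gap_sum_nonneg: "0 \<le> gap_sum x n"
  unfolding gap_sum_def by (intro sum_nonneg gap_term_nonneg)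

lemma abs_interaction_le_gap_sum:
  assumes "i \<in> {1..n}" "j \<in> {1..n}" "i \<noteq> j"
  shows "\<bar>(x i + x j) / (x i - x j)\<bar> \<le> 2 * gap_sum x n"
  using assms
proof (induction i j rule: linorder_wlog)
  case (le i j)
  then have "i < j" by simp
  have "\<bar>(x i + x j) / (x i - x j)\<bar> = (x i + x j) / (x j - x i)"
    using less_of_less[of i j] nonneg[of i] \<open>i < j\<close> le.prems
    by (simp add: interaction_antisym[of "x i" "x j"] add.commute)
  also have "\<dots> \<le> 2 * x j / (x j - x (j - 1))"
  proof (rule frac_le)
    show "x j - x (j - 1) \<le> x j - x i" using le_of_le[of i "j - 1"] \<open>i < j\<close> le.prems by auto
  qed (use less_of_less[of "j - 1" j] le_of_le[of i j] nonneg[of i] \<open>i < j\<close> le.prems in auto)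
  also have "\<dots> = 2 * (x j / (x j - x (j - 1)))" by simp
  also have "\<dots> \<le> 2 * gap_sum x n"
  proof -
    have "j - 1 \<in> {1..n-1}" using \<open>i < j\<close> le.prems by auto
    from gap_term_le_gap_sum[OF this] show ?thesis using \<open>i < j\<close> by simp
  qed
  finally show ?case .
next
  case (sym i j)
  then show ?case
    using interaction_antisym[of "x i" "x j"] by (simp add: add.commute)
qed

lemma abs_drift_le:
  fixes \<alpha> \<beta> \<gamma> :: real
  assumes i: "i \<in> {1..n}"
  shows "\<bar>drift \<alpha> \<beta> \<gamma> x n i\<bar> \<le> \<bar>\<alpha>\<bar> + 2 * \<bar>\<gamma>\<bar> * x n + 2 * \<bar>\<beta>\<bar> * n * gap_sum x n"
proof -
  let ?S = "\<Sum>j\<in>{1..n} - {i}. (x i + x j) / (x i - x j)"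
  have "\<bar>?S\<bar> \<le> (\<Sum>j\<in>{1..n} - {i}. 2 * gap_sum x n)"
    using i by (intro order_trans[OF sum_abs] sum_mono abs_interaction_le_gap_sum) auto
  also have "\<dots> \<le> n * (2 * gap_sum x n)"
    using i gap_sum_nonneg by (simp add: card_Diff_singleton mult_right_mono)
  finally have "\<bar>\<beta> * ?S\<bar> \<le> \<bar>\<beta>\<bar> * (n * (2 * gap_sum x n))"
    unfolding abs_mult by (rule mult_left_mono) simp
  moreover have "\<bar>2 * \<gamma> * x i\<bar> \<le> 2 * \<bar>\<gamma>\<bar> * x n"
    using nonneg[OF i] le_last[OF i] by (simp add: abs_mult mult_left_mono)
  ultimately show ?thesis
    unfolding drift_def by linarith
qed

lemma sum_abs_drift_le:
  fixes \<alpha> \<beta> \<gamma> :: real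
  assumes "x n \<le> B"
  shows "(\<Sum>i\<in>{1..n}. \<bar>drift \<alpha> \<beta> \<gamma> x n i\<bar>)
    \<le> n * (\<bar>\<alpha>\<bar> + 2 * \<bar>\<gamma>\<bar> * B) + 2 * \<bar>\<beta>\<bar> * (real n)\<^sup>2 * gap_sum x n"
proof -
  have "\<bar>drift \<alpha> \<beta> \<gamma> x n i\<bar> \<le> \<bar>\<alpha>\<bar> + 2 * \<bar>\<gamma>\<bar> * B + 2 * \<bar>\<beta>\<bar> * n * gap_sum x n"
    if "i \<in> {1..n}" for i
    using abs_drift_le[OF that, where \<alpha> = \<alpha> and \<beta> = \<beta> and \<gamma> = \<gamma>] mult_left_mono[OF assms, of "2 * \<bar>\<gamma>\<bar>"] by simp
  then have "(\<Sum>i\<in>{1..n}. \<bar>drift \<alpha> \<beta> \<gamma> x n i\<bar>)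
      \<le> (\<Sum>i\<in>{1..n}. \<bar>\<alpha>\<bar> + 2 * \<bar>\<gamma>\<bar> * B + 2 * \<bar>\<beta>\<bar> * n * gap_sum x n)"
    by (rule sum_mono)
  then show ?thesis
    by (simp add: power2_eq_square algebra_simps)
qed

lemma abs_sum_initial_le:
  assumes "k \<in> {1..n}"
  shows "\<bar>\<Sum>i\<in>{1..k}. x i\<bar> \<le> n * x n"
proof -
  have "0 \<le> (\<Sum>i\<in>{1..k}. x i)"
    using assms by (intro sum_nonneg nonneg) auto
  moreover have "(\<Sum>i\<in>{1..k}. x i) \<le> k * x n"
    using sum_bounded_above[of "{1..k}" x "x n"] assms le_last by simp
  moreover have "k * x n \<le> n * x n"
    using assms nonneg[of n] by (simp add: mult_right_mono)
  ultimately show ?thesis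
    by simp
qed

lemma cross_block_interaction_le:
  assumes k: "k \<in> {1..n-1}"
  shows "(\<Sum>i\<in>{1..k}. \<Sum>j\<in>{Suc k..n}. (x i + x j) / (x i - x j)) \<le> - (x (Suc k) / (x (Suc k) - x k))"
proof -
  let ?\<phi> = "\<lambda>i j. (x i + x j) / (x i - x j)"
  have nonpos: "?\<phi> i j \<le> 0" if "i \<in> {1..k}" "j \<in> {Suc k..n}" for i j
    using less_of_less[of i j] nonneg[of i] nonneg[of j] that k
    by (auto intro!: divide_nonneg_neg)
  have "- (\<Sum>i\<in>{1..k}. \<Sum>j\<in>{Suc k..n}. ?\<phi> i j) \<ge> - (\<Sum>j\<in>{Suc k..n}. ?\<phi> k j)"
    using k nonpos by (auto simp flip: sum_negf intro!: member_le_sum sum_nonneg)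
  moreover have "- (\<Sum>j\<in>{Suc k..n}. ?\<phi> k j) \<ge> - ?\<phi> k (Suc k)"
    using k nonpos by (auto simp flip: sum_negf intro!: member_le_sum)
  moreover have "- ?\<phi> k (Suc k) \<ge> x (Suc k) / (x (Suc k) - x k)"
  proof -
    have "x k < x (Suc k)" "0 \<le> x k"
      using k by (auto intro: increasing nonneg)
    then show ?thesis
      by (simp add: interaction_antisym[of "x k" "x (Suc k)"] add.commute divide_right_mono)
  qed
  ultimately show ?thesis
    by linarith
qed

lemma gap_term_le_sum_abs_drift:
  fixes \<alpha> \<beta> \<gamma> :: real
  assumes k: "k \<in> {1..n-1}" and "x n \<le> B"
  shows "\<bar>\<beta>\<bar> * (x (Suc k) / (x (Suc k) - x k))
    \<le> n * \<bar>\<alpha>\<bar> + 2 * \<bar>\<gamma>\<bar> * n * B + (\<Sum>i\<in>{1..n}. \<bar>drift \<alpha> \<beta> \<gamma> x n i\<bar>)"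
proof -
  let ?T = "\<Sum>i\<in>{1..k}. \<Sum>j\<in>{Suc k..n}. (x i + x j) / (x i - x j)"
  have "k \<le> n"
    using k by auto
  have "x (Suc k) / (x (Suc k) - x k) \<le> \<bar>?T\<bar>"
    using cross_block_interaction_le[OF k] by linarith
  then have "\<bar>\<beta>\<bar> * (x (Suc k) / (x (Suc k) - x k)) \<le> \<bar>\<beta> * ?T\<bar>"
    unfolding abs_mult by (rule mult_left_mono) simp
  also have "\<beta> * ?T = (\<Sum>i\<in>{1..k}. drift \<alpha> \<beta> \<gamma> x n i) - k * \<alpha> + 2 * \<gamma> * (\<Sum>i\<in>{1..k}. x i)"
  proof -
    from sum_drift_initial_block[OF \<open>k \<le> n\<close>, where \<alpha> = \<alpha> and \<beta> = \<beta> and \<gamma> = \<gamma> and x = x]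
    show ?thesis by linarith
  qed
  also have "\<bar>\<dots>\<bar> \<le> (\<Sum>i\<in>{1..n}. \<bar>drift \<alpha> \<beta> \<gamma> x n i\<bar>) + n * \<bar>\<alpha>\<bar> + 2 * \<bar>\<gamma>\<bar> * n * B"
  proof -
    have "\<bar>\<Sum>i\<in>{1..k}. drift \<alpha> \<beta> \<gamma> x n i\<bar> \<le> (\<Sum>i\<in>{1..n}. \<bar>drift \<alpha> \<beta> \<gamma> x n i\<bar>)"
      using k by (intro order_trans[OF sum_abs] sum_mono2) auto
    moreover have "\<bar>k * \<alpha>\<bar> \<le> n * \<bar>\<alpha>\<bar>"
      using \<open>k \<le> n\<close> by (simp add: abs_mult mult_right_mono)
    moreover have "\<bar>\<Sum>i\<in>{1..k}. x i\<bar> \<le> n * B"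
      using k assms(2) by (intro order_trans[OF abs_sum_initial_le]) (auto intro: mult_left_mono)
    then have "\<bar>2 * \<gamma> * (\<Sum>i\<in>{1..k}. x i)\<bar> \<le> 2 * \<bar>\<gamma>\<bar> * (n * B)"
      by (simp add: abs_mult mult_left_mono)
    ultimately show ?thesis
      by linarith
  qed
  finally show ?thesis
    by linarith
qed

lemma gap_sum_le_sum_abs_drift:
  fixes \<alpha> \<beta> \<gamma> :: real
  assumes "x n \<le> B"
  shows "\<bar>\<beta>\<bar> * gap_sum x n
    \<le> (n - 1) * (n * \<bar>\<alpha>\<bar> + 2 * \<bar>\<gamma>\<bar> * n * B + (\<Sum>i\<in>{1..n}. \<bar>drift \<alpha> \<beta> \<gamma> x n i\<bar>))"
proof -
  have "\<bar>\<beta>\<bar> * gap_sum x n = (\<Sum>k\<in>{1..n-1}. \<bar>\<beta>\<bar> * (x (Suc k) / (x (Suc k) - x k)))"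
    by (simp add: gap_sum_def sum_distrib_left)
  also have "\<dots> \<le> card {1..n-1} * (n * \<bar>\<alpha>\<bar> + 2 * \<bar>\<gamma>\<bar> * n * B + (\<Sum>i\<in>{1..n}. \<bar>drift \<alpha> \<beta> \<gamma> x n i\<bar>))"
    by (rule sum_bounded_above) (rule gap_term_le_sum_abs_drift[OF _ assms])
  finally show ?thesis
    by simp
qed

end

lemma set_nn_integral_sum_ennreal:
  fixes u :: "'i \<Rightarrow> 'a \<Rightarrow> real"
  assumes "\<And>i. i \<in> I \<Longrightarrow> u i \<in> borel_measurable M" and "A \<in> sets M"
    and "AE x in M. x \<in> A \<longrightarrow> (\<forall>i\<in>I. 0 \<le> u i x)"
  shows "(\<Sum>i\<in>I. \<integral>\<^sup>+ x\<in>A. ennreal (u i x) \<partial>M) = (\<integral>\<^sup>+ x\<in>A. ennreal (\<Sum>i\<in>I. u i x) \<partial>M)"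
proof -
  have "(\<Sum>i\<in>I. \<integral>\<^sup>+ x\<in>A. ennreal (u i x) \<partial>M) = (\<integral>\<^sup>+ x. (\<Sum>i\<in>I. ennreal (u i x) * indicator A x) \<partial>M)"
    using assms(1,2) by (intro nn_integral_sum[symmetric]) auto
  also have "\<dots> = (\<integral>\<^sup>+ x\<in>A. ennreal (\<Sum>i\<in>I. u i x) \<partial>M)"
    using assms(3) by (intro nn_integral_cong_AE) (auto simp flip: sum_distrib_right split: split_indicator)
  finally show ?thesis .
qed

lemma set_nn_integral_finite_of_affine_bound:
  fixes u v :: "'a \<Rightarrow> real"
  assumes [measurable]: "v \<in> borel_measurable M" "A \<in> sets M"
    and "emeasure M A < \<infinity>"
    and bound: "AE x in M. x \<in> A \<longrightarrow> u x \<le> C + c * v x" and "0 \<le> C" "0 \<le> c"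
    and "(\<integral>\<^sup>+ x\<in>A. ennreal (v x) \<partial>M) < \<infinity>"
  shows "(\<integral>\<^sup>+ x\<in>A. ennreal (u x) \<partial>M) < \<infinity>"
proof -
  have "(\<integral>\<^sup>+ x\<in>A. ennreal (u x) \<partial>M)
      \<le> (\<integral>\<^sup>+ x. ennreal C * indicator A x + ennreal c * (ennreal (v x) * indicator A x) \<partial>M)"
    using bound
  proof (intro nn_integral_mono_AE, eventually_elim)
    case (elim x)
    have "ennreal (C + c * v x) \<le> ennreal C + ennreal (c * v x)"
      using \<open>0 \<le> C\<close> by (auto simp: ennreal_plus_if intro: ennreal_leI)
    then have "x \<in> A \<Longrightarrow> ennreal (u x) \<le> ennreal C + ennreal c * ennreal (v x)"
      using elim \<open>0 \<le> c\<close> by (metis ennreal_leI ennreal_mult' order_trans)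
    then show ?case
      by (simp split: split_indicator)
  qed
  also have "\<dots> = ennreal C * emeasure M A + ennreal c * (\<integral>\<^sup>+ x\<in>A. ennreal (v x) \<partial>M)"
    by (subst nn_integral_add) (auto simp: nn_integral_cmult nn_integral_cmult_indicator)
  also have "\<dots> < \<infinity>"
    using assms by (simp add: ennreal_mult_less_top ennreal_mult_eq_top_iff)
  finally show ?thesis .
qed

lemma set_nn_integral_finite_iff_of_affine_bounds:
  fixes u v :: "'a \<Rightarrow> real"
  assumes "u \<in> borel_measurable M" "v \<in> borel_measurable M" "A \<in> sets M"
    and "emeasure M A < \<infinity>"
    and "AE x in M. x \<in> A \<longrightarrow> u x \<le> C + c * v x" "0 \<le> C" "0 \<le> c"
    and "AE x in M. x \<in> A \<longrightarrow> v x \<le> C' + c' * u x" "0 \<le> C'" "0 \<le> c'"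
  shows "(\<integral>\<^sup>+ x\<in>A. ennreal (u x) \<partial>M) < \<infinity> \<longleftrightarrow> (\<integral>\<^sup>+ x\<in>A. ennreal (v x) \<partial>M) < \<infinity>"
proof
  assume "(\<integral>\<^sup>+ x\<in>A. ennreal (u x) \<partial>M) < \<infinity>"
  then show "(\<integral>\<^sup>+ x\<in>A. ennreal (v x) \<partial>M) < \<infinity>"
    by (rule set_nn_integral_finite_of_affine_bound[OF assms(1,3,4,8-10)])
next
  assume "(\<integral>\<^sup>+ x\<in>A. ennreal (v x) \<partial>M) < \<infinity>"
  then show "(\<integral>\<^sup>+ x\<in>A. ennreal (u x) \<partial>M) < \<infinity>"
    by (rule set_nn_integral_finite_of_affine_bound[OF assms(2-4,5-7)])
qed

lemma sum_gap_ratio_integrals_eq: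
  fixes x :: "nat \<Rightarrow> 'a \<Rightarrow> real"
  assumes [measurable]: "\<And>i. x i \<in> borel_measurable M" "A \<in> sets M"
    and config: "AE s in M. s \<in> A \<longrightarrow> increasing_config (\<lambda>i. x i s) n"
  shows "(\<Sum>i\<in>{1..n-1}. \<integral>\<^sup>+ s\<in>A. gap_ratio (x i s) (x (Suc i) s) \<partial>M)
    = (\<integral>\<^sup>+ s\<in>A. ennreal (gap_sum (\<lambda>i. x i s) n) \<partial>M)"
proof -
  have "(\<Sum>i\<in>{1..n-1}. \<integral>\<^sup>+ s\<in>A. gap_ratio (x i s) (x (Suc i) s) \<partial>M)
      = (\<Sum>i\<in>{1..n-1}. \<integral>\<^sup>+ s\<in>A. ennreal (x (Suc i) s / (x (Suc i) s - x i s)) \<partial>M)"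
  proof (intro sum.cong refl nn_integral_cong_AE)
    fix i assume i: "i \<in> {1..n-1}"
    show "AE s in M. gap_ratio (x i s) (x (Suc i) s) * indicator A s
        = ennreal (x (Suc i) s / (x (Suc i) s - x i s)) * indicator A s"
      using config by eventually_elim
        (use i in \<open>auto simp: gap_ratio_def increasing_config_def split: split_indicator\<close>)
  qed
  also have "\<dots> = (\<integral>\<^sup>+ s\<in>A. ennreal (gap_sum (\<lambda>i. x i s) n) \<partial>M)"
    unfolding gap_sum_def
  proof (intro set_nn_integral_sum_ennreal)
    show "AE s in M. s \<in> A \<longrightarrow> (\<forall>i\<in>{1..n-1}. 0 \<le> x (Suc i) s / (x (Suc i) s - x i s))"
      using config by eventually_elim (auto intro: increasing_config.gap_term_nonneg)
  qed auto
  finally show ?thesis .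
qed

lemma finite_gap_integrals_iff_finite_drift_integrals:
  fixes x :: "nat \<Rightarrow> 'a \<Rightarrow> real" and \<alpha> \<beta> \<gamma> B :: real
  assumes "\<beta> \<noteq> 0"
    and [measurable]: "\<And>i. x i \<in> borel_measurable M" "A \<in> sets M"
    and "emeasure M A < \<infinity>"
    and config: "AE s in M. s \<in> A \<longrightarrow> increasing_config (\<lambda>i. x i s) n"
    and bounded: "\<And>s. s \<in> A \<Longrightarrow> x n s \<le> B"
  shows "(\<Sum>i\<in>{1..n-1}. \<integral>\<^sup>+ s\<in>A. gap_ratio (x i s) (x (Suc i) s) \<partial>M) < \<infinity> \<longleftrightarrow>
    (\<Sum>i\<in>{1..n}. \<integral>\<^sup>+ s\<in>A. ennreal \<bar>drift \<alpha> \<beta> \<gamma> (\<lambda>j. x j s) n i\<bar> \<partial>M) < \<infinity>"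
proof -
  define G where "G s = gap_sum (\<lambda>i. x i s) n" for s
  define D where "D s = (\<Sum>i\<in>{1..n}. \<bar>drift \<alpha> \<beta> \<gamma> (\<lambda>j. x j s) n i\<bar>)" for s
  have G_measurable: "G \<in> borel_measurable M" and D_measurable: "D \<in> borel_measurable M"
    unfolding G_def D_def gap_sum_def drift_def by measurable
  have drifts: "(\<Sum>i\<in>{1..n}. \<integral>\<^sup>+ s\<in>A. ennreal \<bar>drift \<alpha> \<beta> \<gamma> (\<lambda>j. x j s) n i\<bar> \<partial>M)
      = (\<integral>\<^sup>+ s\<in>A. ennreal (D s) \<partial>M)"
    unfolding D_def by (intro set_nn_integral_sum_ennreal) (auto simp: drift_def)
  have bounded_abs: "x n s \<le> \<bar>B\<bar>" if "s \<in> A" for s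
    using bounded[OF that] by linarith
  have G_le: "AE s in M. s \<in> A \<longrightarrow>
      G s \<le> (n - 1) * (n * \<bar>\<alpha>\<bar> + 2 * \<bar>\<gamma>\<bar> * n * \<bar>B\<bar>) / \<bar>\<beta>\<bar> + (n - 1) / \<bar>\<beta>\<bar> * D s"
    using config
  proof eventually_elim
    case (elim s)
    show ?case
    proof
      assume "s \<in> A"
      then have "\<bar>\<beta>\<bar> * G s \<le> (n - 1) * (n * \<bar>\<alpha>\<bar> + 2 * \<bar>\<gamma>\<bar> * n * \<bar>B\<bar> + D s)"
        using elim unfolding D_def G_def by (intro increasing_config.gap_sum_le_sum_abs_drift bounded_abs) auto
      then show "G s \<le> (n - 1) * (n * \<bar>\<alpha>\<bar> + 2 * \<bar>\<gamma>\<bar> * n * \<bar>B\<bar>) / \<bar>\<beta>\<bar> + (n - 1) / \<bar>\<beta>\<bar> * D s"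
        using \<open>\<beta> \<noteq> 0\<close> by (simp add: field_simps)
    qed
  qed
  have D_le: "AE s in M. s \<in> A \<longrightarrow> D s \<le> n * (\<bar>\<alpha>\<bar> + 2 * \<bar>\<gamma>\<bar> * \<bar>B\<bar>) + 2 * \<bar>\<beta>\<bar> * (real n)\<^sup>2 * G s"
    using config unfolding D_def G_def
    by eventually_elim (blast intro: increasing_config.sum_abs_drift_le bounded_abs)
  have "(\<integral>\<^sup>+ s\<in>A. ennreal (G s) \<partial>M) < \<infinity> \<longleftrightarrow> (\<integral>\<^sup>+ s\<in>A. ennreal (D s) \<partial>M) < \<infinity>"
    by (rule set_nn_integral_finite_iff_of_affine_bounds[OF G_measurable D_measurable assms(3,4) G_le _ _ D_le])
      auto
  then show ?thesis
    unfolding drifts sum_gap_ratio_integrals_eq[OF assms(2,3) config] G_def .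
qed

lemma borel_measurable_continuous_on_max_0:
  fixes g :: "real \<Rightarrow> 'a::topological_space"
  assumes "continuous_on {0..} g"
  shows "(\<lambda>s. g (max 0 s)) \<in> borel_measurable borel"
proof (rule borel_measurable_continuous_onI)
  show "continuous_on UNIV (\<lambda>s. g (max 0 s))"
    by (rule continuous_on_compose2[OF assms]) (auto intro!: continuous_intros)
qed

theorem lemma2:
  fixes \<alpha> \<beta> \<gamma> :: real and n :: nat and f :: "nat \<Rightarrow> real \<Rightarrow> real" and t :: real
  assumes "\<alpha> \<ge> 0" and "\<beta> > 0" and "n \<ge> 2"
    and cont: "\<And>i. i \<in> {1..n} \<Longrightarrow> continuous_on {0..} (f i)"
    and nonneg: "\<And>s. s \<ge> 0 \<Longrightarrow> 0 \<le> f 1 s"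
    and ordered: "\<And>i s. s \<ge> 0 \<Longrightarrow> 1 \<le> i \<Longrightarrow> i < n \<Longrightarrow> f i s \<le> f (Suc i) s"
    and strict: "AE s in lborel. s \<ge> 0 \<longrightarrow> (\<forall>i. 1 \<le> i \<and> i < n \<longrightarrow> f i s < f (Suc i) s)"
    and "t \<ge> 0"
  shows "(\<Sum>i\<in>{1..n-1}. \<integral>\<^sup>+ s\<in>{0..t}. gap_ratio (f i s) (f (Suc i) s) \<partial>lborel) < \<infinity>
     \<longleftrightarrow> (\<Sum>i\<in>{1..n}. \<integral>\<^sup>+ s\<in>{0..t}. ennreal \<bar>\<alpha> - 2 * \<gamma> * f i s
            + \<beta> * (\<Sum>j\<in>{1..n} - {i}. (f i s + f j s) / (f i s - f j s))\<bar> \<partial>lborel) < \<infinity>"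
proof -
  define F where "F i s = (if i \<in> {1..n} then f i (max 0 s) else 0)" for i s
  have F_eq: "F i s = f i s" if "i \<in> {1..n}" "s \<in> {0..t}" for i s
    using that by (simp add: F_def)
  have F_measurable: "F i \<in> borel_measurable borel" for i
    using borel_measurable_continuous_on_max_0[OF cont, of i]
    unfolding F_def by (cases "i \<in> {1..n}") auto
  obtain B where B: "\<And>s. s \<in> {0..t} \<Longrightarrow> F n s \<le> B"
    using continuous_attains_sup[of "{0..t}" "f n"] cont[of n] \<open>n \<ge> 2\<close> \<open>t \<ge> 0\<close>
    by (fastforce simp: F_eq intro: continuous_on_subset)
  have config: "AE s in lborel. s \<in> {0..t} \<longrightarrow> increasing_config (\<lambda>i. F i s) n"
    using strict by eventually_elim (use nonneg \<open>n \<ge> 2\<close> in \<open>auto simp: increasing_config_def F_eq\<close>)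
  have gaps: "(\<Sum>i\<in>{1..n-1}. \<integral>\<^sup>+ s\<in>{0..t}. gap_ratio (f i s) (f (Suc i) s) \<partial>lborel)
      = (\<Sum>i\<in>{1..n-1}. \<integral>\<^sup>+ s\<in>{0..t}. gap_ratio (F i s) (F (Suc i) s) \<partial>lborel)"
    by (intro sum.cong refl set_nn_integral_cong) (auto simp: F_eq)
  have drifts: "(\<Sum>i\<in>{1..n}. \<integral>\<^sup>+ s\<in>{0..t}. ennreal \<bar>\<alpha> - 2 * \<gamma> * f i s
            + \<beta> * (\<Sum>j\<in>{1..n} - {i}. (f i s + f j s) / (f i s - f j s))\<bar> \<partial>lborel)
      = (\<Sum>i\<in>{1..n}. \<integral>\<^sup>+ s\<in>{0..t}. ennreal \<bar>drift \<alpha> \<beta> \<gamma> (\<lambda>j. F j s) n i\<bar> \<partial>lborel)"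
    by (intro sum.cong refl set_nn_integral_cong) (auto simp: drift_def F_eq intro!: sum.cong)
  show ?thesis
    unfolding gaps drifts using \<open>\<beta> > 0\<close> F_measurable config B
    by (intro finite_gap_integrals_iff_finite_drift_integrals) (auto simp: emeasure_lborel_Icc_eq)
qed

end
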